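(* Let $m\ge n\ge1$, let $B=\{\cos(\theta)|0\rangle+\sin(\theta)|1\rangle\mid0\le\theta<2\pi\}$ and $B^{\otimes n}=\{|b_1\rangle\otimes\cdots\otimes|b_n\rangle\mid|b_j\rangle\in B\}$. Let $\mathcal E=\{\sqrt{p_i}U_i\mid1\le i\le N\}$ with each $U_i$ unitary on $\mathcal H_{2^m}$ and $\sum_ip_i=1$, let $\rho_a$ be an $(m-n)$-qubit density matrix and $\rho_0$ an $m$-qubit density matrix. If $[B^{\otimes n},\mathcal E,\rho_a,\rho_0]$ is a private quantum channel, then $H(p_1,\dots,p_N)\ge n$, and in particular $N\ge2^n$.
   Context: $\mathcal{H}_{2^k}$ denotes the Hilbert space of $k$ qubits. $H(p_1,\dots,p_N)=-\sum_ip_i\log_2p_i$. Definition (private quantum channel, PQC): for a set $\mathcal S\subseteq\mathcal H_{2^n}$ of pure $n$-qubit states, $\mathcal E=\{\sqrt{p_i}U_i\}$ with $U_i$ unitary on $\mathcal H_{2^m}$, $p_i\ge0$, $\sum_ip_i=1$, $\rho_a$ an $(m-n)$-qubit density matrix and $\rho_0$ an $m$-qubit density matrix, $[\mathcal S,\mathcal E,\rho_a,\rho_0]$ is a PQC iff for all $|\phi\rangle\in\mathcal S$, $\sum_ip_iU_i(|\phi\rangle\langle\phi|\otimes\rho_a)U_i^\dagger=\rho_0$. *)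

theory Defs
  imports Complex_Main "Jordan_Normal_Form.Matrix"
begin

definition adj :: "complex mat \<Rightarrow> complex mat" where
  "adj A = mat (dim_col A) (dim_row A) (\<lambda>(i,j). cnj (A $$ (j,i)))"

definition unitary :: "nat \<Rightarrow> complex mat \<Rightarrow> bool" where
  "unitary d U \<longleftrightarrow> U \<in> carrier_mat d d \<and> adj U * U = 1\<^sub>m d \<and> U * adj U = 1\<^sub>m d"

definition mtrace :: "complex mat \<Rightarrow> complex" where
  "mtrace A = (\<Sum>i<dim_row A. A $$ (i,i))"

definition density :: "nat \<Rightarrow> complex mat \<Rightarrow> bool" where
  "density d \<rho> \<longleftrightarrow> \<rho> \<in> carrier_mat d d \<and> adj \<rho> = \<rho> \<and> mtrace \<rho> = 1 \<and>
     (\<forall>v \<in> carrier_vec d. 0 \<le> Re (conjugate v \<bullet> (\<rho> *\<^sub>v v)))"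

(* Kronecker (tensor) products; the first factor is the most significant index *)
definition kron_mat :: "complex mat \<Rightarrow> complex mat \<Rightarrow> complex mat" where
  "kron_mat A B = mat (dim_row A * dim_row B) (dim_col A * dim_col B)
     (\<lambda>(i,j). A $$ (i div dim_row B, j div dim_col B) * B $$ (i mod dim_row B, j mod dim_col B))"

definition kron_vec :: "complex vec \<Rightarrow> complex vec \<Rightarrow> complex vec" where
  "kron_vec v w = vec (dim_vec v * dim_vec w) (\<lambda>i. v $ (i div dim_vec w) * w $ (i mod dim_vec w))"

definition ketbra :: "complex vec \<Rightarrow> complex mat" where
  "ketbra v = mat (dim_vec v) (dim_vec v) (\<lambda>(i,j). v $ i * cnj (v $ j))"

definition bstate :: "real \<Rightarrow> complex vec" where
  "bstate t = vec_of_list [complex_of_real (cos t), complex_of_real (sin t)]"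

definition tensor_list :: "complex vec list \<Rightarrow> complex vec" where
  "tensor_list vs = foldr kron_vec vs (vec 1 (\<lambda>_. 1))"

definition Btensor :: "nat \<Rightarrow> complex vec set" where
  "Btensor n = {tensor_list (map bstate ts) | ts. length ts = n \<and> (\<forall>t \<in> set ts. 0 \<le> t \<and> t < 2 * pi)}"

definition msum :: "nat \<Rightarrow> nat \<Rightarrow> (nat \<Rightarrow> complex mat) \<Rightarrow> complex mat" where
  "msum d N f = mat d d (\<lambda>(i,j). \<Sum>k<N. f k $$ (i,j))"

(* [S, E = {sqrt(p_i) U_i | i < N}, rho_a, rho_0] is a private quantum channel
   (n-qubit states, m-qubit unitaries); indices 0..N-1 *)
definition PQC :: "nat \<Rightarrow> nat \<Rightarrow> complex vec set \<Rightarrow> nat \<Rightarrow> (nat \<Rightarrow> real) \<Rightarrow> (nat \<Rightarrow> complex mat)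
    \<Rightarrow> complex mat \<Rightarrow> complex mat \<Rightarrow> bool" where
  "PQC n m S N p U \<rho>a \<rho>0 \<longleftrightarrow>
     S \<subseteq> carrier_vec (2^n) \<and> (\<forall>\<phi>\<in>S. conjugate \<phi> \<bullet> \<phi> = 1) \<and>
     (\<forall>i<N. 0 \<le> p i \<and> unitary (2^m) (U i)) \<and> (\<Sum>i<N. p i) = 1 \<and>
     density (2^(m-n)) \<rho>a \<and> density (2^m) \<rho>0 \<and>
     (\<forall>\<phi>\<in>S. msum (2^m) N (\<lambda>i. complex_of_real (p i) \<cdot>\<^sub>m
         (U i * kron_mat (ketbra \<phi>) \<rho>a * adj (U i))) = \<rho>0)"

definition entropy :: "nat \<Rightarrow> (nat \<Rightarrow> real) \<Rightarrow> real" where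
  "entropy N p = - (\<Sum>i<N. (if p i = 0 then 0 else p i * log 2 (p i)))"

end

theory Submission
  imports Defs
begin

(* Every computational basis state |k>, k < 2^n, lies in B^(x)n. Feed |k> into the channel and
   test rho0 against the c-th column u_c of U_i, where k = c div 2^(m-n): all terms of the mixture
   are nonnegative and the i-th one equals p_i <c|(|k><k| (x) rho_a)|c> = p_i (rho_a)_(c mod 2^(m-n)).
   Summing over c gives 1 = tr rho0 >= p_i 2^n tr rho_a = p_i 2^n, so every p_i <= 2^-n, which
   forces H(p) >= n and N >= 2^n. *)

definition quad_form :: "complex mat \<Rightarrow> complex vec \<Rightarrow> complex" where
  "quad_form M v = conjugate v \<bullet> (M *\<^sub>v v)"

lemma sum_lessThan_mult:
  fixes g :: "nat \<Rightarrow> 'a::comm_monoid_add"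
  shows "(\<Sum>x<A * r. g x) = (\<Sum>s<A. \<Sum>a<r. g (s * r + a))"
proof -
  have "(\<Sum>a<r. g (s * r + a)) = sum g {s * r..<s * r + r}" for s
    using sum.shift_bounds_nat_ivl[of g 0 "s * r" r] by (simp add: atLeast0LessThan add.commute)
  then show ?thesis by (simp add: sum.nat_group)
qed

lemma quad_form_expand:
  assumes "M \<in> carrier_mat d d" and "v \<in> carrier_vec d"
  shows "quad_form M v = (\<Sum>x<d. \<Sum>y<d. cnj (v $ x) * M $$ (x, y) * v $ y)"
  using assms by (simp add: quad_form_def scalar_prod_def lessThan_atLeast0 sum_distrib_left mult.assoc)

lemma quad_form_unit_vec:
  assumes "M \<in> carrier_mat d d" and "j < d"
  shows "quad_form M (unit_vec d j) = M $$ (j, j)"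
proof -
  have "conjugate (unit_vec d j) = (unit_vec d j :: complex vec)"
    by (rule eq_vecI) (auto simp: unit_vec_def)
  then show ?thesis using assms by (simp add: quad_form_def)
qed

lemma quad_form_smult:
  assumes "M \<in> carrier_mat d d" and "v \<in> carrier_vec d"
  shows "quad_form (a \<cdot>\<^sub>m M) v = a * quad_form M v"
  using assms by (simp add: quad_form_expand[of _ d] sum_distrib_left mult_ac)

lemma quad_form_msum:
  assumes "\<And>j. j < N \<Longrightarrow> f j \<in> carrier_mat d d" and "v \<in> carrier_vec d"
  shows "quad_form (msum d N f) v = (\<Sum>j<N. quad_form (f j) v)"
proof -
  have "quad_form (msum d N f) v = (\<Sum>x<d. \<Sum>y<d. \<Sum>j<N. cnj (v $ x) * f j $$ (x, y) * v $ y)"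
    using assms(2) by (simp add: quad_form_expand[of _ d] msum_def sum_distrib_left sum_distrib_right)
  also have "\<dots> = (\<Sum>j<N. \<Sum>x<d. \<Sum>y<d. cnj (v $ x) * f j $$ (x, y) * v $ y)"
    by (subst sum.swap, rule sum.cong, rule refl, rule sum.swap)
  also have "\<dots> = (\<Sum>j<N. quad_form (f j) v)"
    using assms by (simp add: quad_form_expand[of _ d])
  finally show ?thesis .
qed

lemma adj_carrier_mat [simp]: "U \<in> carrier_mat a b \<Longrightarrow> adj U \<in> carrier_mat b a"
  by (simp add: adj_def)

lemma scalar_prod_conjugate_adj:
  assumes "U \<in> carrier_mat d d" and "v \<in> carrier_vec d" and "z \<in> carrier_vec d"
  shows "conjugate v \<bullet> (U *\<^sub>v z) = conjugate (adj U *\<^sub>v v) \<bullet> z"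
proof -
  have "conjugate v \<bullet> (U *\<^sub>v z) = (\<Sum>x<d. \<Sum>y<d. cnj (v $ x) * U $$ (x, y) * z $ y)"
    using assms by (simp add: scalar_prod_def lessThan_atLeast0 sum_distrib_left mult.assoc)
  also have "\<dots> = (\<Sum>y<d. \<Sum>x<d. cnj (v $ x) * U $$ (x, y) * z $ y)"
    by (rule sum.swap)
  also have "\<dots> = conjugate (adj U *\<^sub>v v) \<bullet> z"
    using assms by (simp add: scalar_prod_def lessThan_atLeast0 sum_distrib_left sum_distrib_right adj_def mult_ac)
  finally show ?thesis .
qed

lemma quad_form_conjugation:
  assumes U: "U \<in> carrier_mat d d" and K: "K \<in> carrier_mat d d" and v: "v \<in> carrier_vec d"
  shows "quad_form (U * K * adj U) v = quad_form K (adj U *\<^sub>v v)"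
proof -
  have w: "adj U *\<^sub>v v \<in> carrier_vec d" using U v by (meson adj_carrier_mat mult_mat_vec_carrier)
  have "(U * K * adj U) *\<^sub>v v = (U * K) *\<^sub>v (adj U *\<^sub>v v)"
    by (rule assoc_mult_mat_vec) (use assms in auto)
  also have "\<dots> = U *\<^sub>v (K *\<^sub>v (adj U *\<^sub>v v))"
    by (rule assoc_mult_mat_vec) (use assms w in auto)
  finally have "(U * K * adj U) *\<^sub>v v = U *\<^sub>v (K *\<^sub>v (adj U *\<^sub>v v))" .
  moreover have "K *\<^sub>v (adj U *\<^sub>v v) \<in> carrier_vec d" using K w by simp
  ultimately show ?thesis
    using scalar_prod_conjugate_adj[OF U v] by (simp add: quad_form_def)
qed

lemma quad_form_mixed_unitary_ge:
  assumes U: "\<And>j. j < N \<Longrightarrow> U j \<in> carrier_mat d d" and K: "K \<in> carrier_mat d d"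
    and K_psd: "\<And>w. w \<in> carrier_vec d \<Longrightarrow> 0 \<le> Re (quad_form K w)"
    and p: "\<And>j. j < N \<Longrightarrow> 0 \<le> p j" and i: "i < N" and v: "v \<in> carrier_vec d"
  shows "p i * Re (quad_form K (adj (U i) *\<^sub>v v))
    \<le> Re (quad_form (msum d N (\<lambda>j. complex_of_real (p j) \<cdot>\<^sub>m (U j * K * adj (U j)))) v)"
proof -
  let ?q = "\<lambda>j. Re (quad_form K (adj (U j) *\<^sub>v v))"
  have UKU: "U j * K * adj (U j) \<in> carrier_mat d d" if "j < N" for j
    using U[OF that] K by (meson adj_carrier_mat mult_carrier_mat)
  have "quad_form (msum d N (\<lambda>j. complex_of_real (p j) \<cdot>\<^sub>m (U j * K * adj (U j)))) v
      = (\<Sum>j<N. quad_form (complex_of_real (p j) \<cdot>\<^sub>m (U j * K * adj (U j))) v)"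
    using UKU v by (intro quad_form_msum) auto
  also have "\<dots> = (\<Sum>j<N. complex_of_real (p j) * quad_form K (adj (U j) *\<^sub>v v))"
    using U K v UKU by (intro sum.cong refl) (simp add: quad_form_smult[of _ d] quad_form_conjugation[of _ d])
  finally have "Re (quad_form (msum d N (\<lambda>j. complex_of_real (p j) \<cdot>\<^sub>m (U j * K * adj (U j)))) v)
      = (\<Sum>j<N. p j * ?q j)"
    by (simp add: Re_sum)
  moreover have "p i * ?q i \<le> (\<Sum>j<N. p j * ?q j)"
    using U v i by (intro member_le_sum)
      (auto intro!: mult_nonneg_nonneg p K_psd intro: mult_mat_vec_carrier[of _ d d])
  ultimately show ?thesis by simp
qed

lemma sum_quad_form_col_unitary:
  assumes U: "unitary d U" and \<rho>: "\<rho> \<in> carrier_mat d d"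
  shows "(\<Sum>c<d. quad_form \<rho> (col U c)) = mtrace \<rho>"
proof -
  have Uc: "U \<in> carrier_mat d d" and UU: "U * adj U = 1\<^sub>m d" using U by (auto simp: unitary_def)
  have orth: "(\<Sum>c<d. U $$ (y, c) * cnj (U $$ (x, c))) = (if y = x then 1 else 0)"
    if "x < d" "y < d" for x y
  proof -
    have "(U * adj U) $$ (y, x) = (\<Sum>c<d. U $$ (y, c) * cnj (U $$ (x, c)))"
      using Uc that by (simp add: scalar_prod_def lessThan_atLeast0 adj_def)
    then show ?thesis using UU that by simp
  qed
  have "(\<Sum>c<d. quad_form \<rho> (col U c))
      = (\<Sum>c<d. \<Sum>x<d. \<Sum>y<d. cnj (U $$ (x, c)) * \<rho> $$ (x, y) * U $$ (y, c))"
    using Uc \<rho> by (intro sum.cong refl) (simp add: quad_form_expand[OF \<rho>])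
  also have "\<dots> = (\<Sum>x<d. \<Sum>y<d. \<Sum>c<d. cnj (U $$ (x, c)) * \<rho> $$ (x, y) * U $$ (y, c))"
    by (subst sum.swap, rule sum.cong, rule refl, rule sum.swap)
  also have "\<dots> = (\<Sum>x<d. \<Sum>y<d. \<rho> $$ (x, y) * (\<Sum>c<d. U $$ (y, c) * cnj (U $$ (x, c))))"
    by (simp add: sum_distrib_left mult_ac)
  also have "\<dots> = (\<Sum>x<d. \<Sum>y<d. if y = x then \<rho> $$ (x, y) else 0)"
    by (intro sum.cong refl) (simp add: orth)
  also have "\<dots> = mtrace \<rho>" using \<rho> by (simp add: mtrace_def)
  finally show ?thesis .
qed

lemma adj_mult_col_unitary:
  assumes "unitary d U" and "c < d"
  shows "adj U *\<^sub>v col U c = unit_vec d c"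
proof -
  have U: "U \<in> carrier_mat d d" and "adj U * U = 1\<^sub>m d" using assms(1) by (auto simp: unitary_def)
  then have "col (adj U * U) c = unit_vec d c" using assms(2) by simp
  then show ?thesis using col_mult2[OF adj_carrier_mat[OF U] U assms(2)] by simp
qed

lemma quad_form_kron_ketbra_unit_vec:
  assumes k: "k < A" and \<rho>: "\<rho> \<in> carrier_mat r r" and w: "w \<in> carrier_vec (A * r)"
  shows "quad_form (kron_mat (ketbra (unit_vec A k)) \<rho>) w = quad_form \<rho> (vec r (\<lambda>a. w $ (k * r + a)))"
proof -
  let ?K = "kron_mat (ketbra (unit_vec A k)) \<rho>"
  have K: "?K \<in> carrier_mat (A * r) (A * r)" using \<rho> by (simp add: kron_mat_def ketbra_def)
  have "s * r + a < A * r" if "s < A" "a < r" for s a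
    using that mult_le_mono1[of "Suc s" A r] by simp
  then have K_entry: "?K $$ (s * r + a, t * r + b) = (if s = k then if t = k then \<rho> $$ (a, b) else 0 else 0)"
    if "s < A" "t < A" "a < r" "b < r" for s t a b
    using that k \<rho> by (auto simp: kron_mat_def ketbra_def unit_vec_def)
  have only_k: "(\<Sum>s<A. f s) = f k" if "\<And>s. s < A \<Longrightarrow> s \<noteq> k \<Longrightarrow> f s = 0" for f :: "nat \<Rightarrow> complex"
    using k that by (subst sum.mono_neutral_right[of _ "{k}"]) auto
  have "quad_form ?K w = (\<Sum>s<A. \<Sum>a<r. \<Sum>t<A. \<Sum>b<r.
      cnj (w $ (s * r + a)) * ?K $$ (s * r + a, t * r + b) * w $ (t * r + b))"
    by (simp add: quad_form_expand[OF K w] sum_lessThan_mult)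
  also have "\<dots> = (\<Sum>a<r. \<Sum>t<A. \<Sum>b<r.
      cnj (w $ (k * r + a)) * ?K $$ (k * r + a, t * r + b) * w $ (t * r + b))"
    by (rule only_k) (auto simp: K_entry)
  also have "\<dots> = (\<Sum>a<r. \<Sum>b<r. cnj (w $ (k * r + a)) * ?K $$ (k * r + a, k * r + b) * w $ (k * r + b))"
    by (intro sum.cong refl only_k) (auto simp: K_entry k)
  also have "\<dots> = (\<Sum>a<r. \<Sum>b<r. cnj (w $ (k * r + a)) * \<rho> $$ (a, b) * w $ (k * r + b))"
    by (simp add: K_entry k)
  also have "\<dots> = quad_form \<rho> (vec r (\<lambda>a. w $ (k * r + a)))"
    by (simp add: quad_form_expand[OF \<rho>])
  finally show ?thesis .
qed

lemma kron_vec_unit_vec: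
  assumes "b < B" and "k < M"
  shows "kron_vec (unit_vec B b) (unit_vec M k) = unit_vec (B * M) (b * M + k)"
proof (rule eq_vecI)
  fix i assume "i < dim_vec (unit_vec (B * M) (b * M + k))"
  then have i: "i < B * M" by simp
  then have "i div M < B" by (simp add: less_mult_imp_div_less)
  moreover have "(i div M = b \<and> i mod M = k) \<longleftrightarrow> i = b * M + k"
    using assms by auto
  ultimately show "kron_vec (unit_vec B b) (unit_vec M k) $ i = unit_vec (B * M) (b * M + k) $ i"
    using i assms by (auto simp: kron_vec_def unit_vec_def)
qed (simp add: kron_vec_def)

lemma unit_vec_in_Btensor: "k < 2 ^ n \<Longrightarrow> unit_vec (2 ^ n) k \<in> Btensor n"
proof (induction n arbitrary: k)
  case 0
  then show ?case unfolding Btensor_def tensor_list_def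
    by (auto intro!: exI[of _ "[]"] eq_vecI)
next
  case (Suc n)
  define b where "b = k div 2 ^ n"
  have b: "b < 2" using Suc.prems by (simp add: b_def less_mult_imp_div_less)
  have "k mod 2 ^ n < 2 ^ n" by simp
  then obtain ts where ts: "unit_vec (2 ^ n) (k mod 2 ^ n) = tensor_list (map bstate ts)"
      "length ts = n" "\<forall>t\<in>set ts. 0 \<le> t \<and> t < 2 * pi"
    using Suc.IH unfolding Btensor_def by blast
  define t where "t = (if b = 0 then 0 else pi / 2)"
  have "bstate t = unit_vec 2 b"
    using b by (intro eq_vecI) (auto simp: t_def bstate_def less_2_cases_iff)
  then have "tensor_list (map bstate (t # ts)) = kron_vec (unit_vec 2 b) (unit_vec (2 ^ n) (k mod 2 ^ n))"
    using ts by (simp add: tensor_list_def)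
  also have "\<dots> = unit_vec (2 ^ Suc n) k"
    using kron_vec_unit_vec[OF b \<open>k mod 2 ^ n < 2 ^ n\<close>] by (simp add: b_def div_mult_mod_eq)
  finally show ?case
    unfolding Btensor_def using ts pi_gt_zero by (auto intro!: exI[of _ "t # ts"] simp: t_def)
qed

lemma vec_block_unit_vec:
  assumes "c < A * r"
  shows "vec r (\<lambda>a. unit_vec (A * r) c $ (c div r * r + a)) = unit_vec r (c mod r)"
proof (rule eq_vecI)
  fix a assume "a < dim_vec (unit_vec r (c mod r))"
  then have "a < r" by simp
  moreover have "c div r * r + a < A * r"
    using \<open>a < r\<close> assms less_mult_imp_div_less[of c A r] mult_le_mono1[of "Suc (c div r)" A r] by simp
  moreover have "c div r * r + a = c \<longleftrightarrow> a = c mod r"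
    using div_mult_mod_eq[of c r] by linarith
  ultimately show "vec r (\<lambda>a. unit_vec (A * r) c $ (c div r * r + a)) $ a = unit_vec r (c mod r) $ a"
    by (simp add: unit_vec_def)
qed simp

lemma PQC_Btensor_diag_le:
  assumes pqc: "PQC n m (Btensor n) N p U \<rho>a \<rho>0" and "n \<le> m" and i: "i < N" and c: "c < 2 ^ m"
  shows "p i * Re (\<rho>a $$ (c mod 2 ^ (m - n), c mod 2 ^ (m - n))) \<le> Re (quad_form \<rho>0 (col (U i) c))"
proof -
  define r where "r = (2::nat) ^ (m - n)"
  have d: "(2::nat) ^ m = 2 ^ n * r" using \<open>n \<le> m\<close> by (simp add: r_def flip: power_add)
  define k where "k = c div r"
  have k: "k < 2 ^ n" using c by (simp add: k_def d less_mult_imp_div_less)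
  define K where "K = kron_mat (ketbra (unit_vec (2 ^ n) k)) \<rho>a"
  have p: "\<And>j. j < N \<Longrightarrow> 0 \<le> p j \<and> unitary (2 ^ m) (U j)" and \<rho>a: "density r \<rho>a"
    and \<rho>0: "\<rho>0 = msum (2 ^ m) N (\<lambda>j. complex_of_real (p j) \<cdot>\<^sub>m (U j * K * adj (U j)))"
    using pqc unit_vec_in_Btensor[OF k] by (simp_all add: PQC_def r_def K_def)
  have \<rho>a_carrier: "\<rho>a \<in> carrier_mat r r" using \<rho>a by (simp add: density_def)
  have U: "U j \<in> carrier_mat (2 ^ m) (2 ^ m)" if "j < N" for j
    using p[OF that] by (simp add: unitary_def)
  have K: "K \<in> carrier_mat (2 ^ m) (2 ^ m)"
    using \<rho>a_carrier by (simp add: K_def d kron_mat_def ketbra_def)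
  have K_form: "quad_form K w = quad_form \<rho>a (vec r (\<lambda>a. w $ (k * r + a)))"
    if "w \<in> carrier_vec (2 ^ m)" for w
    using quad_form_kron_ketbra_unit_vec[OF k \<rho>a_carrier] that by (simp add: K_def d)
  have K_psd: "0 \<le> Re (quad_form K w)" if "w \<in> carrier_vec (2 ^ m)" for w
    unfolding K_form[OF that] using \<rho>a by (simp add: density_def quad_form_def)
  have "quad_form K (adj (U i) *\<^sub>v col (U i) c) = quad_form K (unit_vec (2 ^ m) c)"
    using adj_mult_col_unitary[OF conjunct2[OF p[OF i]] c] by simp
  also have "\<dots> = quad_form \<rho>a (vec r (\<lambda>a. unit_vec (2 ^ m) c $ (k * r + a)))"
    by (rule K_form) simp
  also have "\<dots> = quad_form \<rho>a (unit_vec r (c mod r))"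
    using c by (simp only: k_def d vec_block_unit_vec)
  also have "\<dots> = \<rho>a $$ (c mod r, c mod r)"
    by (rule quad_form_unit_vec[OF \<rho>a_carrier]) (simp add: r_def)
  finally have "quad_form K (adj (U i) *\<^sub>v col (U i) c) = \<rho>a $$ (c mod r, c mod r)" .
  moreover have "p i * Re (quad_form K (adj (U i) *\<^sub>v col (U i) c)) \<le> Re (quad_form \<rho>0 (col (U i) c))"
    unfolding \<rho>0 by (rule quad_form_mixed_unitary_ge[where U = U]) (use U K K_psd p i c in auto)
  ultimately show ?thesis by (simp add: r_def)
qed

lemma PQC_Btensor_prob_le:
  assumes pqc: "PQC n m (Btensor n) N p U \<rho>a \<rho>0" and "n \<le> m" and i: "i < N"
  shows "p i \<le> 1 / 2 ^ n"
proof -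
  define r where "r = (2::nat) ^ (m - n)"
  have d: "(2::nat) ^ m = 2 ^ n * r" using \<open>n \<le> m\<close> by (simp add: r_def flip: power_add)
  have \<rho>a: "density r \<rho>a" and \<rho>0: "density (2 ^ m) \<rho>0" and U: "unitary (2 ^ m) (U i)"
    using pqc i by (simp_all add: PQC_def r_def)
  have "\<rho>a \<in> carrier_mat r r" using \<rho>a by (simp add: density_def)
  with \<rho>a have "(\<Sum>a<r. Re (\<rho>a $$ (a, a))) = 1"
    by (simp add: density_def mtrace_def flip: Re_sum)
  then have "p i * 2 ^ n = (\<Sum>s<(2::nat) ^ n. \<Sum>a<r. p i * Re (\<rho>a $$ (a, a)))"
    by (simp flip: sum_distrib_left)
  also have "\<dots> = (\<Sum>c<2 ^ m. p i * Re (\<rho>a $$ (c mod r, c mod r)))"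
    by (simp add: d sum_lessThan_mult)
  also have "\<dots> \<le> (\<Sum>c<2 ^ m. Re (quad_form \<rho>0 (col (U i) c)))"
    using PQC_Btensor_diag_le[OF pqc \<open>n \<le> m\<close> i] by (intro sum_mono) (simp add: r_def)
  also have "\<dots> = 1"
    using sum_quad_form_col_unitary[OF U] \<rho>0 by (simp add: density_def flip: Re_sum)
  finally show ?thesis by (simp add: field_simps)
qed

lemma entropy_ge_neg_log_of_le:
  assumes p: "\<forall>i<N. 0 \<le> p i \<and> p i \<le> q" and sum: "(\<Sum>i<N. p i) = 1"
  shows "- log 2 q \<le> entropy N p"
proof -
  have "p i * - log 2 q \<le> - (if p i = 0 then 0 else p i * log 2 (p i))" if "i < N" for i
  proof (cases "p i = 0")
    case False
    with p that have "0 < p i" and "p i \<le> q" by auto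
    then have "p i * log 2 (p i) \<le> p i * log 2 q" by (simp add: mult_left_mono)
    with False show ?thesis by simp
  qed simp
  then have "(\<Sum>i<N. p i * - log 2 q) \<le> (\<Sum>i<N. - (if p i = 0 then 0 else p i * log 2 (p i)))"
    by (rule sum_mono) simp
  moreover have "(\<Sum>i<N. p i * - log 2 q) = - log 2 q"
    using sum by (metis sum_distrib_right mult_1)
  ultimately show ?thesis by (simp add: entropy_def sum_negf)
qed

lemma count_mult_bound_ge_one:
  assumes "\<forall>i<N. p i \<le> q" and "(\<Sum>i<N. p i) = 1"
  shows "1 \<le> real N * q"
  using assms sum_mono[of "{..<N}" p "\<lambda>_. q"] by simp

theorem corollary9:
  fixes m n N :: nat and p :: "nat \<Rightarrow> real" and U :: "nat \<Rightarrow> complex mat"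
    and \<rho>a \<rho>0 :: "complex mat"
  assumes "1 \<le> n" and "n \<le> m"
    and "\<forall>i<N. 0 \<le> p i \<and> unitary (2^m) (U i)" and "(\<Sum>i<N. p i) = 1"
    and "density (2^(m-n)) \<rho>a" and "density (2^m) \<rho>0"
    and "PQC n m (Btensor n) N p U \<rho>a \<rho>0"
  shows "entropy N p \<ge> real n \<and> N \<ge> 2^n"
proof -
  have p: "\<forall>i<N. 0 \<le> p i \<and> p i \<le> 1 / 2 ^ n"
    using assms(3) PQC_Btensor_prob_le[OF assms(7) assms(2)] by auto
  have "real n = - log 2 (1 / 2 ^ n)" by (simp add: log_divide)
  also have "\<dots> \<le> entropy N p" using entropy_ge_neg_log_of_le[OF p assms(4)] .
  finally have "real n \<le> entropy N p" .
  have "1 \<le> real N * (1 / 2 ^ n)" using p assms(4) by (intro count_mult_bound_ge_one) auto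
  then have "real (2 ^ n) \<le> real N" by (simp add: field_simps)
  then have "2 ^ n \<le> N" by linarith
  with \<open>real n \<le> entropy N p\<close> show ?thesis by simp
qed

end
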